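(* Let $X$ be a complex Banach space, $T\in B(X)$ a Fredholm operator, and $(T_n)$ a sequence in $B(X)$ with $T_n\overset{\nu}{\to}T$. Then $[\limsup\sigma_{ap}(T_n)]\setminus\{0\}\subseteq\sigma_{ap}(T)$.
   Context: $\sigma_{ap}(S)=\{\lambda\in\mathbb{C}: S-\lambda \text{ is not bounded below}\}$. For subsets $E_n\subseteq\mathbb{C}$, $\limsup E_n$ is the set of $\lambda$ such that for every $\epsilon>0$ the ball $B(\lambda,\epsilon)$ meets $E_n$ for infinitely many $n$. $T_n\overset{\nu}{\to}T$ means $(\|T_n\|)$ is bounded, $\|(T_n-T)T\|\to0$ and $\|(T_n-T)T_n\|\to0$. *)

theory Defs
  imports "HOL-Analysis.Analysis"
begin

text \<open>Complex Banach spaces: HOL-Analysis only provides real normed spaces, so we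
  add a complex scalar multiplication compatible with the real one and the norm.\<close>

class complex_banach = banach +
  fixes cscale :: "complex \<Rightarrow> 'a \<Rightarrow> 'a"
  assumes cscale_add_right: "cscale a (x + y) = cscale a x + cscale a y"
    and cscale_add_left: "cscale (a + b) x = cscale a x + cscale b x"
    and cscale_cscale: "cscale a (cscale b x) = cscale (a * b) x"
    and cscale_one: "cscale 1 x = x"
    and cscale_of_real: "cscale (of_real r) x = scaleR r x"
    and norm_cscale: "norm (cscale a x) = cmod a * norm x"

definition bop :: "('a::complex_banach \<Rightarrow> 'a) \<Rightarrow> bool" where
  "bop T \<longleftrightarrow> bounded_linear T \<and> (\<forall>c x. T (cscale c x) = cscale c (T x))"

text \<open>Finite-dimensional subset (real and complex finite dimensionality coincide).\<close>
definition findim :: "'a::real_vector set \<Rightarrow> bool" where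
  "findim S \<longleftrightarrow> (\<exists>B. finite B \<and> S \<subseteq> span B)"

definition fredholm :: "('a::complex_banach \<Rightarrow> 'a) \<Rightarrow> bool" where
  "fredholm T \<longleftrightarrow> bop T \<and> findim {x. T x = 0} \<and> closed (range T) \<and>
     (\<exists>M. subspace M \<and> findim M \<and> range T + M = UNIV)"

definition bounded_below :: "('a::real_normed_vector \<Rightarrow> 'b::real_normed_vector) \<Rightarrow> bool" where
  "bounded_below S \<longleftrightarrow> (\<exists>c>0. \<forall>x. c * norm x \<le> norm (S x))"

definition ap_spectrum :: "('a::complex_banach \<Rightarrow> 'a) \<Rightarrow> complex set" where
  "ap_spectrum S = {l. \<not> bounded_below (\<lambda>x. S x - cscale l x)}"

definition limsup_sets :: "(nat \<Rightarrow> complex set) \<Rightarrow> complex set" where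
  "limsup_sets E = {l. \<forall>\<epsilon>>0. infinite {n. ball l \<epsilon> \<inter> E n \<noteq> {}}}"

definition nu_conv :: "(nat \<Rightarrow> 'a::complex_banach \<Rightarrow> 'a) \<Rightarrow> ('a \<Rightarrow> 'a) \<Rightarrow> bool" where
  "nu_conv Tn T \<longleftrightarrow> bounded (range (\<lambda>n. onorm (Tn n))) \<and>
     (\<lambda>n. onorm (\<lambda>x. Tn n (T x) - T (T x))) \<longlonglongrightarrow> 0 \<and>
     (\<lambda>n. onorm (\<lambda>x. Tn n (Tn n x) - T (Tn n x))) \<longlonglongrightarrow> 0"

end

theory Submission
  imports Defs
begin

text \<open>Let \<open>T - \<lambda>\<close> be bounded below by \<open>c\<close>, with \<open>\<lambda> \<noteq> 0\<close>. For \<open>\<mu>\<close> close to \<open>\<lambda>\<close>,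
  \<open>T - \<mu>\<close> is still bounded below by \<open>c/2\<close>, and \<open>\<mu> \<noteq> 0\<close>. For any bounded \<open>S\<close> the identity
  \<open>\<mu>(T - \<mu>) = (S + \<mu> - T)(S - \<mu>) - (S - T)S\<close> gives
  \<open>|\<mu>| c/2 \<parallel>x\<parallel> \<le> (\<parallel>S\<parallel> + |\<mu>| + \<parallel>T\<parallel>) \<parallel>(S - \<mu>)x\<parallel> + \<parallel>(S - T)S\<parallel> \<parallel>x\<parallel>\<close>,
  so \<open>S - \<mu>\<close> is bounded below as soon as \<open>\<parallel>(S - T)S\<parallel> < |\<mu>| c/2\<close>. Since
  \<open>\<parallel>(T\<^sub>n - T)T\<^sub>n\<parallel> \<rightarrow> 0\<close>, a whole ball around \<open>\<lambda>\<close> misses \<open>\<sigma>\<^sub>a\<^sub>p(T\<^sub>n)\<close> for all large \<open>n\<close>.\<close>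

lemma cscale_diff_right: "cscale a (x - y) = cscale a x - cscale a (y::'a::complex_banach)"
  using cscale_add_right[of a "x - y" y] by (simp add: algebra_simps)

lemma cscale_diff_left: "cscale (a - b) (x::'a::complex_banach) = cscale a x - cscale b x"
  using cscale_add_left[of "a - b" b x] by (simp add: algebra_simps)

lemma norm_shift_residual_le:
  fixes T S :: "'a::complex_banach \<Rightarrow> 'a"
  assumes "bop T" and "bop S"
  shows "cmod \<mu> * norm (T x - cscale \<mu> x) \<le>
     (onorm S + cmod \<mu> + onorm T) * norm (S x - cscale \<mu> x)
     + onorm (\<lambda>x. S (S x) - T (S x)) * norm x"
proof -
  have lT: "bounded_linear T" and lS: "bounded_linear S"
    and cT: "\<And>c x. T (cscale c x) = cscale c (T x)"
    and cS: "\<And>c x. S (cscale c x) = cscale c (S x)"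
    using assms unfolding bop_def by auto
  have lD: "bounded_linear (\<lambda>x. S (S x) - T (S x))"
    by (intro bounded_linear_sub bounded_linear_compose[OF lS lS] bounded_linear_compose[OF lT lS])
  define y where "y = S x - cscale \<mu> x"
  define D where "D = S (S x) - T (S x)"
  have "cscale \<mu> (T x - cscale \<mu> x) = S y + cscale \<mu> y - T y - D"
    unfolding y_def D_def using lS lT cS cT
    by (simp add: linear_simps cscale_diff_right cscale_cscale)
  then have "cmod \<mu> * norm (T x - cscale \<mu> x) = norm (S y + cscale \<mu> y - T y - D)"
    by (metis norm_cscale)
  also have "\<dots> \<le> norm (S y) + norm (cscale \<mu> y) + norm (T y) + norm D"
    by (smt (verit) norm_diff_ineq norm_triangle_ineq4 norm_triangle_ineq)
  also have "\<dots> \<le> onorm S * norm y + cmod \<mu> * norm y + onorm T * norm y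
       + onorm (\<lambda>x. S (S x) - T (S x)) * norm x"
    using onorm[OF lS, of y] onorm[OF lT, of y] onorm[OF lD, of x]
    unfolding D_def norm_cscale by simp
  finally show ?thesis unfolding y_def by (simp add: algebra_simps)
qed

lemma bounded_below_shift_if_small_defect:
  fixes T S :: "'a::complex_banach \<Rightarrow> 'a"
  assumes "bop T" and "bop S" and "\<mu> \<noteq> 0"
    and lower: "\<And>x. c * norm x \<le> norm (T x - cscale \<mu> x)"
    and defect: "onorm (\<lambda>x. S (S x) - T (S x)) < cmod \<mu> * c"
  shows "bounded_below (\<lambda>x. S x - cscale \<mu> x)"
  unfolding bounded_below_def
proof (intro exI conjI allI)
  define A where "A = onorm S + cmod \<mu> + onorm T"
  define \<eta> where "\<eta> = onorm (\<lambda>x. S (S x) - T (S x))"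
  have "0 \<le> onorm S" "0 \<le> onorm T"
    using assms(1,2) by (simp_all add: bop_def onorm_pos_le)
  moreover have "cmod \<mu> > 0"
    using \<open>\<mu> \<noteq> 0\<close> by simp
  ultimately have A_pos: "A > 0"
    unfolding A_def by linarith
  show "0 < (cmod \<mu> * c - \<eta>) / A"
    using A_pos defect unfolding \<eta>_def by simp
  fix x
  have "cmod \<mu> * (c * norm x) \<le> cmod \<mu> * norm (T x - cscale \<mu> x)"
    using lower by (simp add: mult_left_mono)
  also have "\<dots> \<le> A * norm (S x - cscale \<mu> x) + \<eta> * norm x"
    unfolding A_def \<eta>_def using assms(1,2) by (rule norm_shift_residual_le)
  finally have "(cmod \<mu> * c - \<eta>) * norm x \<le> A * norm (S x - cscale \<mu> x)"
    by (simp add: algebra_simps)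
  then show "(cmod \<mu> * c - \<eta>) / A * norm x \<le> norm (S x - cscale \<mu> x)"
    using A_pos by (simp add: field_simps)
qed

lemma lower_bound_shift_perturb:
  fixes T :: "'a::complex_banach \<Rightarrow> 'a"
  assumes lower: "\<And>x. c * norm x \<le> norm (T x - cscale l x)"
    and close: "cmod (l - \<mu>) \<le> c / 2"
  shows "c / 2 * norm x \<le> norm (T x - cscale \<mu> x)"
proof -
  have "T x - cscale l x = (T x - cscale \<mu> x) - cscale (l - \<mu>) x"
    by (simp add: cscale_diff_left)
  then have "norm (T x - cscale l x) \<le> norm (T x - cscale \<mu> x) + cmod (l - \<mu>) * norm x"
    by (metis norm_cscale norm_triangle_ineq4)
  moreover have "cmod (l - \<mu>) * norm x \<le> c / 2 * norm x"
    using close by (rule mult_right_mono) simp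
  ultimately show ?thesis
    using lower[of x] by linarith
qed

lemma ap_spectrum_eventually_avoids_ball:
  fixes T :: "'a::complex_banach \<Rightarrow> 'a" and Tn :: "nat \<Rightarrow> 'a \<Rightarrow> 'a"
  assumes "bop T" and "\<And>n. bop (Tn n)"
    and defect: "(\<lambda>n. onorm (\<lambda>x. Tn n (Tn n x) - T (Tn n x))) \<longlonglongrightarrow> 0"
    and "l \<notin> ap_spectrum T" and "l \<noteq> 0"
  shows "\<exists>e>0. \<forall>\<^sub>F n in sequentially. ball l e \<inter> ap_spectrum (Tn n) = {}"
proof -
  obtain c where "c > 0" and lower: "\<And>x. c * norm x \<le> norm (T x - cscale l x)"
    using \<open>l \<notin> ap_spectrum T\<close> unfolding ap_spectrum_def bounded_below_def by auto
  define e where "e = min (c / 2) (cmod l / 2)"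
  have "e > 0"
    unfolding e_def using \<open>c > 0\<close> \<open>l \<noteq> 0\<close> by simp
  have "\<forall>\<^sub>F n in sequentially. onorm (\<lambda>x. Tn n (Tn n x) - T (Tn n x)) < cmod l * c / 4"
    using \<open>c > 0\<close> \<open>l \<noteq> 0\<close> by (intro order_tendstoD(2)[OF defect]) simp
  then have "\<forall>\<^sub>F n in sequentially. ball l e \<inter> ap_spectrum (Tn n) = {}"
  proof (rule eventually_mono)
    fix n
    assume small: "onorm (\<lambda>x. Tn n (Tn n x) - T (Tn n x)) < cmod l * c / 4"
    have "\<mu> \<notin> ap_spectrum (Tn n)" if "\<mu> \<in> ball l e" for \<mu>
    proof -
      have dist: "cmod (l - \<mu>) < e"
        using that by (simp add: dist_norm)
      then have "cmod l / 2 \<le> cmod \<mu>"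
        using norm_triangle_ineq2[of l \<mu>] unfolding e_def by linarith
      then have "cmod l * c / 4 \<le> cmod \<mu> * (c / 2)"
        using \<open>c > 0\<close> by (simp add: mult_right_mono)
      with small have small_at_\<mu>: "onorm (\<lambda>x. Tn n (Tn n x) - T (Tn n x)) < cmod \<mu> * (c / 2)"
        by linarith
      have lower_at_\<mu>: "\<And>x. c / 2 * norm x \<le> norm (T x - cscale \<mu> x)"
        using lower dist unfolding e_def by (intro lower_bound_shift_perturb) auto
      have "\<mu> \<noteq> 0"
        using \<open>cmod l / 2 \<le> cmod \<mu>\<close> \<open>l \<noteq> 0\<close> by auto
      have "bounded_below (\<lambda>x. Tn n x - cscale \<mu> x)"
        using \<open>bop T\<close> assms(2) \<open>\<mu> \<noteq> 0\<close> lower_at_\<mu> small_at_\<mu>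
        by (rule bounded_below_shift_if_small_defect)
      then show ?thesis
        unfolding ap_spectrum_def by simp
    qed
    then show "ball l e \<inter> ap_spectrum (Tn n) = {}"
      by blast
  qed
  with \<open>e > 0\<close> show ?thesis by blast
qed

theorem theorem3p3:
  fixes T :: "'a::complex_banach \<Rightarrow> 'a" and Tn :: "nat \<Rightarrow> 'a \<Rightarrow> 'a"
  assumes "fredholm T"
    and "\<And>n. bop (Tn n)"
    and "nu_conv Tn T"
  shows "limsup_sets (\<lambda>n. ap_spectrum (Tn n)) - {0} \<subseteq> ap_spectrum T"
proof
  fix l
  assume l: "l \<in> limsup_sets (\<lambda>n. ap_spectrum (Tn n)) - {0}"
  show "l \<in> ap_spectrum T"
  proof (rule ccontr)
    assume "l \<notin> ap_spectrum T"
    have "bop T"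
      using \<open>fredholm T\<close> by (simp add: fredholm_def)
    moreover have "(\<lambda>n. onorm (\<lambda>x. Tn n (Tn n x) - T (Tn n x))) \<longlonglongrightarrow> 0"
      using \<open>nu_conv Tn T\<close> by (simp add: nu_conv_def)
    ultimately obtain e where "e > 0"
      and "\<forall>\<^sub>F n in sequentially. ball l e \<inter> ap_spectrum (Tn n) = {}"
      using ap_spectrum_eventually_avoids_ball assms(2) \<open>l \<notin> ap_spectrum T\<close> l by blast
    then obtain N where avoid: "\<And>n. n \<ge> N \<Longrightarrow> ball l e \<inter> ap_spectrum (Tn n) = {}"
      unfolding eventually_sequentially by blast
    have "{n. ball l e \<inter> ap_spectrum (Tn n) \<noteq> {}} \<subseteq> {..<N}"
      using avoid not_le by auto
    then have "finite {n. ball l e \<inter> ap_spectrum (Tn n) \<noteq> {}}"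
      using finite_subset by blast
    with l \<open>e > 0\<close> show False
      unfolding limsup_sets_def by blast
  qed
qed

end
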